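(* Let $A$ be an observable on $\mathbb C^d$ with orthonormal eigenbasis $\{\varphi_k\}_{k=0}^{d-1}$, let $\Phi$ be a unit vector and $p_k=|\langle\varphi_k,\Phi\rangle|^2$. Then for every unit vector $\Psi\in\mathbb C^d$, $$d(T_{A\Phi}\Psi,\Phi)\le 2\min_k d(\Phi,\varphi_k)=2\sqrt2\,\sqrt{1-\max_k\sqrt{p_k}}.$$
   Context: $\mathcal H=\mathbb C^d$ with the standard inner product; states are unit vectors. An observable $A$ is non-degenerate and identified with its orthonormal eigenbasis $\{\varphi_k\}_{k=0}^{d-1}$. Bures metric: $d(\Phi,\Psi)=\sqrt{2-2|\langle\Phi,\Psi\rangle|}$. Physical imposition operator: $T_{A\Phi}\Psi=\sum_{k=0}^{d-1}|\langle\varphi_k,\Phi\rangle|\,u_k(\Psi)\,\varphi_k$, where $u_k(\Psi)=\langle\varphi_k,\Psi\rangle/|\langle\varphi_k,\Psi\rangle|$ if $\langle\varphi_k,\Psi\rangle\ne0$ and $u_k(\Psi)=1$ otherwise. *)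

theory Defs
  imports "HOL-Analysis.Analysis"
begin

text \<open>Vectors of C^d are modelled as complex^'n with d = CARD('n).
  Standard inner product, conjugate-linear in the first argument.\<close>
definition cinner :: "complex^'n \<Rightarrow> complex^'n \<Rightarrow> complex" where
  "cinner x y = (\<Sum>i\<in>UNIV. cnj (x $ i) * y $ i)"

definition unit_vec :: "complex^'n \<Rightarrow> bool" where
  "unit_vec x \<longleftrightarrow> cinner x x = 1"

definition orthonormal_basis :: "('n \<Rightarrow> complex^'n) \<Rightarrow> bool" where
  "orthonormal_basis \<phi> \<longleftrightarrow>
     (\<forall>j k. cinner (\<phi> j) (\<phi> k) = (if j = k then 1 else 0))"

definition bures :: "complex^'n \<Rightarrow> complex^'n \<Rightarrow> real" where
  "bures \<Phi> \<Psi> = sqrt (2 - 2 * cmod (cinner \<Phi> \<Psi>))"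

definition uphase :: "('n \<Rightarrow> complex^'n) \<Rightarrow> 'n \<Rightarrow> complex^'n \<Rightarrow> complex" where
  "uphase \<phi> k \<Psi> =
     (if cinner (\<phi> k) \<Psi> \<noteq> 0 then cinner (\<phi> k) \<Psi> / complex_of_real (cmod (cinner (\<phi> k) \<Psi>))
      else 1)"

text \<open>Physical imposition operator T_{A Phi}, A identified with its eigenbasis phi\<close>
definition imposition :: "('n \<Rightarrow> complex^'n) \<Rightarrow> complex^'n \<Rightarrow> complex^'n \<Rightarrow> complex^'n" where
  "imposition \<phi> \<Phi> \<Psi> =
     (\<chi> i. \<Sum>k\<in>UNIV. complex_of_real (cmod (cinner (\<phi> k) \<Phi>)) * uphase \<phi> k \<Psi> * (\<phi> k $ i))"

end

theory Submission imports Defs begin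

text \<open>Write \<open>a\<^sub>k = |\<langle>\<phi>\<^sub>k,\<Phi>\<rangle>|\<close>. Then
  \<open>\<langle>T\<Psi>,\<Phi>\<rangle> = \<Sum>\<^sub>k a\<^sub>k\<^sup>2 \<cdot> (unimodular phase)\<close>, and by Parseval \<open>\<Sum>\<^sub>k a\<^sub>k\<^sup>2 = 1\<close>.
  Isolating one term in the reverse triangle inequality gives
  \<open>|\<langle>T\<Psi>,\<Phi>\<rangle>| \<ge> 2a\<^sub>k\<^sup>2 - 1 \<ge> 4a\<^sub>k - 3\<close> for every \<open>k\<close>, which is exactly
  \<open>d(T\<Psi>,\<Phi>)\<^sup>2 \<le> 4 d(\<Phi>,\<phi>\<^sub>k)\<^sup>2\<close>. The phases of \<open>\<Psi>\<close> never matter, so \<open>\<Psi>\<close> need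
  not be normalised.\<close>

lemma cinner_commute: "cinner x y = cnj (cinner y x)"
  by (simp add: cinner_def cnj_sum mult.commute)

lemma norm_uphase [simp]: "cmod (uphase \<phi> k \<Psi>) = 1"
  by (simp add: uphase_def norm_divide)

text \<open>An orthonormal family of \<open>d\<close> vectors in \<open>\<complex>\<^sup>d\<close> is complete: the matrix with
  the \<open>\<phi>\<^sub>k\<close> as columns has a left inverse, hence also a right inverse.\<close>
lemma orthonormal_basis_completeness:
  fixes \<phi> :: "'n::finite \<Rightarrow> complex^'n"
  assumes "orthonormal_basis \<phi>"
  shows "(\<Sum>k\<in>UNIV. \<phi> k $ i * cnj (\<phi> k $ l)) = (if i = l then 1 else 0)"
proof -
  define B :: "complex^'n^'n" where "B = (\<chi> j i. cnj (\<phi> j $ i))"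
  define C :: "complex^'n^'n" where "C = (\<chi> i k. \<phi> k $ i)"
  have "B ** C = mat 1"
    using assms unfolding orthonormal_basis_def cinner_def
    by (simp add: B_def C_def matrix_matrix_mult_def mat_def vec_eq_iff)
  then have "C ** B = mat 1"
    using matrix_left_right_inverse by blast
  then have "(C ** B) $ i $ l = mat 1 $ i $ l"
    by simp
  then show ?thesis
    by (simp add: B_def C_def matrix_matrix_mult_def mat_def)
qed

lemma orthonormal_basis_parseval:
  fixes \<phi> :: "'n::finite \<Rightarrow> complex^'n"
  assumes "orthonormal_basis \<phi>"
  shows "complex_of_real (\<Sum>k\<in>UNIV. (cmod (cinner (\<phi> k) x))\<^sup>2) = cinner x x"
proof -
  have norm_sq: "complex_of_real ((cmod z)\<^sup>2) = cnj z * z" for z :: complex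
    by (metis complex_norm_square mult.commute of_real_power)
  have "complex_of_real (\<Sum>k\<in>UNIV. (cmod (cinner (\<phi> k) x))\<^sup>2)
      = (\<Sum>k\<in>UNIV. (\<Sum>i\<in>UNIV. \<phi> k $ i * cnj (x $ i)) * (\<Sum>l\<in>UNIV. cnj (\<phi> k $ l) * x $ l))"
    by (simp only: of_real_sum norm_sq) (simp add: cinner_def cnj_sum mult.commute)
  also have "\<dots> = (\<Sum>k\<in>UNIV. \<Sum>i\<in>UNIV. \<Sum>l\<in>UNIV. (\<phi> k $ i * cnj (x $ i)) * (cnj (\<phi> k $ l) * x $ l))"
    by (simp only: sum_product)
  also have "\<dots> = (\<Sum>i\<in>UNIV. \<Sum>l\<in>UNIV. \<Sum>k\<in>UNIV. (\<phi> k $ i * cnj (x $ i)) * (cnj (\<phi> k $ l) * x $ l))"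
    by (subst sum.swap) (rule sum.cong[OF refl], rule sum.swap)
  also have "\<dots> = (\<Sum>i\<in>UNIV. \<Sum>l\<in>UNIV. cnj (x $ i) * x $ l * (\<Sum>k\<in>UNIV. \<phi> k $ i * cnj (\<phi> k $ l)))"
    by (simp only: sum_distrib_left mult_ac)
  also have "\<dots> = cinner x x"
    by (simp add: orthonormal_basis_completeness[OF assms] cinner_def
        if_distrib[of "\<lambda>c. _ * c"] cong: if_cong)
  finally show ?thesis .
qed

lemma cinner_imposition:
  "cinner (imposition \<phi> \<Phi> \<Psi>) \<Phi>
     = (\<Sum>k\<in>UNIV. complex_of_real (cmod (cinner (\<phi> k) \<Phi>)) * cnj (uphase \<phi> k \<Psi>) * cinner (\<phi> k) \<Phi>)"
proof -
  have "cinner (imposition \<phi> \<Phi> \<Psi>) \<Phi>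
      = (\<Sum>i\<in>UNIV. \<Sum>k\<in>UNIV. complex_of_real (cmod (cinner (\<phi> k) \<Phi>)) * cnj (uphase \<phi> k \<Psi>)
                              * (cnj (\<phi> k $ i) * \<Phi> $ i))"
    unfolding cinner_def[of "imposition \<phi> \<Phi> \<Psi>"]
    by (rule sum.cong[OF refl]) (simp add: imposition_def cnj_sum sum_distrib_left sum_distrib_right mult_ac)
  also have "\<dots> = (\<Sum>k\<in>UNIV. complex_of_real (cmod (cinner (\<phi> k) \<Phi>)) * cnj (uphase \<phi> k \<Psi>) * cinner (\<phi> k) \<Phi>)"
    by (subst sum.swap) (simp only: cinner_def sum_distrib_left)
  finally show ?thesis .
qed

lemma norm_sum_ge_twice_norm_term:
  fixes z :: "'a \<Rightarrow> 'b::real_normed_vector"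
  assumes "finite A" and "m \<in> A"
  shows "2 * norm (z m) - (\<Sum>k\<in>A. norm (z k)) \<le> norm (\<Sum>k\<in>A. z k)"
proof -
  have "norm (z m) - (\<Sum>k\<in>A - {m}. norm (z k)) \<le> norm (z m) - norm (\<Sum>k\<in>A - {m}. z k)"
    by (simp add: norm_sum)
  also have "\<dots> \<le> norm (z m + (\<Sum>k\<in>A - {m}. z k))"
    by (metis norm_diff_ineq)
  finally show ?thesis
    using assms by (simp add: sum.remove)
qed

lemma cmod_cinner_imposition_ge:
  fixes \<phi> :: "'n::finite \<Rightarrow> complex^'n"
  assumes "orthonormal_basis \<phi>" and "unit_vec \<Phi>"
  shows "2 * (cmod (cinner (\<phi> k) \<Phi>))\<^sup>2 - 1 \<le> cmod (cinner (imposition \<phi> \<Phi> \<Psi>) \<Phi>)"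
proof -
  define z where "z k = complex_of_real (cmod (cinner (\<phi> k) \<Phi>)) * cnj (uphase \<phi> k \<Psi>) * cinner (\<phi> k) \<Phi>"
    for k
  have norm_z: "cmod (z k) = (cmod (cinner (\<phi> k) \<Phi>))\<^sup>2" for k
    by (simp add: z_def norm_mult power2_eq_square)
  have "complex_of_real (\<Sum>k\<in>UNIV. cmod (z k)) = 1"
    using orthonormal_basis_parseval[OF assms(1), of \<Phi>] assms(2)
    by (simp only: norm_z unit_vec_def)
  then have "(\<Sum>k\<in>UNIV. cmod (z k)) = 1"
    by (rule of_real_eq_1_iff[THEN iffD1])
  then show ?thesis
    using norm_sum_ge_twice_norm_term[of UNIV k z]
    by (simp add: cinner_imposition norm_z z_def[symmetric])
qed

lemma bures_imposition_le:
  fixes \<phi> :: "'n::finite \<Rightarrow> complex^'n"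
  assumes "orthonormal_basis \<phi>" and "unit_vec \<Phi>"
  shows "bures (imposition \<phi> \<Phi> \<Psi>) \<Phi> \<le> 2 * bures \<Phi> (\<phi> k)"
proof -
  let ?a = "cmod (cinner (\<phi> k) \<Phi>)"
  have "2 * ?a\<^sup>2 - 1 \<ge> 4 * ?a - 3"
    using zero_le_power2[of "?a - 1"] by (simp add: power2_eq_square algebra_simps)
  then have "4 * ?a - 3 \<le> cmod (cinner (imposition \<phi> \<Phi> \<Psi>) \<Phi>)"
    using cmod_cinner_imposition_ge[OF assms, of k \<Psi>] by linarith
  then have "2 - 2 * cmod (cinner (imposition \<phi> \<Phi> \<Psi>) \<Phi>) \<le> 4 * (2 - 2 * ?a)"
    by (simp add: algebra_simps)
  then have "bures (imposition \<phi> \<Phi> \<Psi>) \<Phi> \<le> sqrt 4 * sqrt (2 - 2 * ?a)"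
    unfolding bures_def real_sqrt_mult[symmetric] by (rule real_sqrt_le_mono)
  then show ?thesis
    by (simp add: bures_def cinner_commute[of \<Phi>])
qed

lemma Min_bures_basis:
  fixes \<phi> :: "'n::finite \<Rightarrow> complex^'n"
  shows "Min (range (\<lambda>k. bures \<Phi> (\<phi> k)))
           = sqrt 2 * sqrt (1 - Max (range (\<lambda>k. cmod (cinner (\<phi> k) \<Phi>))))"
proof -
  define a where "a = (\<lambda>k. cmod (cinner (\<phi> k) \<Phi>))"
  have "Max (range a) \<in> range a"
    by (intro Max_in) auto
  then obtain m where am: "a m = Max (range a)"
    by (metis rangeE)
  then have "a k \<le> a m" for k
    by simp
  then have "Min (range (\<lambda>k. bures \<Phi> (\<phi> k))) = sqrt (2 - 2 * a m)"
    by (intro Min_eqI) (auto simp: bures_def a_def cinner_commute[of \<Phi>])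
  also have "\<dots> = sqrt 2 * sqrt (1 - a m)"
    by (simp add: real_sqrt_mult[symmetric] algebra_simps)
  also have "\<dots> = sqrt 2 * sqrt (1 - Max (range a))"
    by (simp only: am)
  finally show ?thesis
    unfolding a_def .
qed

theorem proposition2:
  fixes \<phi> :: "'n::finite \<Rightarrow> complex^'n" and \<Phi> \<Psi> :: "complex^'n"
  assumes "orthonormal_basis \<phi>"
    and "unit_vec \<Phi>"
    and "unit_vec \<Psi>"
  defines "p \<equiv> (\<lambda>k. (cmod (cinner (\<phi> k) \<Phi>))^2)"
  shows "bures (imposition \<phi> \<Phi> \<Psi>) \<Phi> \<le> 2 * Min (range (\<lambda>k. bures \<Phi> (\<phi> k)))
         \<and> 2 * Min (range (\<lambda>k. bures \<Phi> (\<phi> k)))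
             = 2 * sqrt 2 * sqrt (1 - Max (range (\<lambda>k. sqrt (p k))))"
proof
  show "bures (imposition \<phi> \<Phi> \<Psi>) \<Phi> \<le> 2 * Min (range (\<lambda>k. bures \<Phi> (\<phi> k)))"
  proof -
    have "Min (range (\<lambda>k. bures \<Phi> (\<phi> k))) \<in> range (\<lambda>k. bures \<Phi> (\<phi> k))"
      by (intro Min_in) auto
    then obtain k where "bures \<Phi> (\<phi> k) = Min (range (\<lambda>k. bures \<Phi> (\<phi> k)))"
      by (metis rangeE)
    then show ?thesis
      using bures_imposition_le[OF assms(1,2), of \<Psi> k] by simp
  qed
  have sqrt_p: "(\<lambda>k. sqrt (p k)) = (\<lambda>k. cmod (cinner (\<phi> k) \<Phi>))"
    by (simp add: p_def)
  show "2 * Min (range (\<lambda>k. bures \<Phi> (\<phi> k)))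
             = 2 * sqrt 2 * sqrt (1 - Max (range (\<lambda>k. sqrt (p k))))"
    unfolding sqrt_p Min_bures_basis by (simp only: mult.assoc)
qed

end
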